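(* Let $K$ be a compact metric space and let $(f_n)$ be a uniformly bounded sequence in $C(K)$ converging pointwise to a function $f$ with $f\notin D(K)$. Then there exists a complex number $c$ with $|c|=1$ such that for every $M<\infty$ and $\kappa>0$ there is a subsequence $(b_j)$ of $(cf_j)$, with difference sequence $(e_j)$, with the following property: for every strictly increasing sequence of integers $0<m_1<m_2<\cdots$ there exist $t\in K$ and an integer $k$ such that (1) $\sum_{j=1}^k \mathrm{Re}\, e_{m_{2j}}(t)>M$; (2) $\mathrm{Re}\, e_{m_{2j}}(t)>0$ for all $1\le j\le k$; (3) $\sum\{|e_i(t)| : i>1,\ i\notin\{m_1,m_2,\dots,m_{2k}\}\}<\kappa$.
   Context: $C(K)$ is the space of continuous complex-valued functions on $K$. $D(K)$ is the set of functions $f:K\to\mathbb{C}$ of the form $f=(u_1-u_2)+i(u_3-u_4)$ with $u_1,\dots,u_4$ bounded real lower semi-continuous functions on $K$ (equivalently, $f=\sum_j\varphi_j$ pointwise for some $(\varphi_j)\subset C(K)$ with $\sup_{k\in K}\sum_j|\varphi_j(k)|<\infty$). The difference sequence $(e_j)$ of $(b_j)$ is $e_1=b_1$, $e_j=b_j-b_{j-1}$ for $j>1$. *)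

theory Defs
  imports "HOL-Analysis.Analysis"
begin

definition lsc_on :: "'a::metric_space set \<Rightarrow> ('a \<Rightarrow> real) \<Rightarrow> bool" where
  "lsc_on K u \<longleftrightarrow> (\<forall>a. openin (top_of_set K) {x \<in> K. u x > a})"

definition D_K :: "'a::metric_space set \<Rightarrow> ('a \<Rightarrow> complex) set" where
  "D_K K = {f. \<exists>u1 u2 u3 u4.
      lsc_on K u1 \<and> lsc_on K u2 \<and> lsc_on K u3 \<and> lsc_on K u4 \<and>
      bounded (u1 ` K) \<and> bounded (u2 ` K) \<and> bounded (u3 ` K) \<and> bounded (u4 ` K) \<and>
      (\<forall>x\<in>K. f x = complex_of_real (u1 x - u2 x) + \<i> * complex_of_real (u3 x - u4 x))}"

text \<open>Difference sequence (1-indexed): e 1 = b 1, e j = b j - b (j-1) for j > 1.\<close>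
definition diff_seq :: "(nat \<Rightarrow> 'a \<Rightarrow> complex) \<Rightarrow> nat \<Rightarrow> 'a \<Rightarrow> complex" where
  "diff_seq b j = (if j \<le> 1 then b j else (\<lambda>x. b j x - b (j - 1) x))"

end

theory Submission
  imports Defs
begin

(*
  Call a budget s winnable from x for a real function g on K if a player, moving by arbitrarily
  small steps, can force upward jumps of g of total size more than s.  If for c = 1 and c = -i
  the winnable budgets for Re (c f) are bounded on K, their supremum V is bounded and both V and
  V + g are upper semicontinuous, so Re f and Im f are differences of bounded lower
  semicontinuous functions and f lies in D(K).  Hence, for some unimodular c, every budget M + 1
  is winnable for Re (c f) from some point.  A winning strategy is recorded as a well-founded
  tree of choices indexed by the radii of the opponent, and the subsequence r is chosen so that
  f_{r n} approximates c f at every position reachable with indices at most n, while the radii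
  force the earlier f_{r i} to move very little.  Playing the strategy along the indices m_j
  until the budget is exhausted yields t: each difference e_{m_{2j}}(t) reproduces a jump of the
  play, these jumps add up to more than M, and every other difference is dominated by a
  geometric series.
*)

lemma sum_power_half_le:
  assumes "finite J" "inj_on f J" "\<And>j. j \<in> J \<Longrightarrow> i < f j"
  shows "(\<Sum>j\<in>J. (1/2::real) ^ f j) \<le> (1/2) ^ i"
proof -
  define N where "N = Max (insert i (f ` J))"
  have "f ` J \<subseteq> {Suc i..N}"
    using assms unfolding N_def by (auto simp: Suc_le_eq)
  then have "(\<Sum>n\<in>f ` J. (1/2::real) ^ n) \<le> (\<Sum>n=Suc i..N. (1/2) ^ n)"
    by (intro sum_mono2) auto
  also have "\<dots> \<le> (1/2) ^ i"
    by (simp add: sum_gp)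
  finally show ?thesis
    using assms(2) by (simp add: sum.reindex)
qed

lemma uniform_modulus_finite:
  fixes G :: "'i \<Rightarrow> 'a::metric_space \<Rightarrow> 'b::metric_space"
  assumes "compact K" "finite I" "\<And>i. i \<in> I \<Longrightarrow> continuous_on K (G i)" "e > 0"
  shows "\<exists>d>0. \<forall>i\<in>I. \<forall>x\<in>K. \<forall>y\<in>K. dist x y < d \<longrightarrow> dist (G i x) (G i y) < e"
proof -
  have "eventually (\<lambda>d. \<forall>x\<in>K. \<forall>y\<in>K. dist x y < d \<longrightarrow> dist (G i x) (G i y) < e) (at_right 0)"
    if "i \<in> I" for i
  proof -
    have "uniformly_continuous_on K (G i)"
      using compact_uniformly_continuous assms(1,3) that by blast
    then obtain d where "d > 0" "\<forall>y\<in>K. \<forall>x\<in>K. dist x y < d \<longrightarrow> dist (G i x) (G i y) < e"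
      unfolding uniformly_continuous_on_def using \<open>e > 0\<close> by blast
    then show ?thesis
      unfolding eventually_at_right_field by (intro exI[of _ d]) auto
  qed
  then have "eventually (\<lambda>d. \<forall>i\<in>I. \<forall>x\<in>K. \<forall>y\<in>K. dist x y < d \<longrightarrow> dist (G i x) (G i y) < e)
      (at_right 0)"
    using assms(2) by (simp add: eventually_ball_finite)
  then obtain b where "b > 0" and
    "\<And>d. 0 < d \<Longrightarrow> d < b \<Longrightarrow> \<forall>i\<in>I. \<forall>x\<in>K. \<forall>y\<in>K. dist x y < d \<longrightarrow> dist (G i x) (G i y) < e"
    unfolding eventually_at_right_field by auto
  from this(2)[of "b/2"] \<open>b > 0\<close> show ?thesis
    by (intro exI[of _ "b/2"]) simp
qed

lemma diff_seq_eq: "1 < i \<Longrightarrow> diff_seq G i x = G i x - G (i - 1) x"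
  by (simp add: diff_seq_def)

lemma abs_Re_diff_le_dist: "\<bar>Re a - Re b\<bar> \<le> dist a b"
  using abs_Re_le_cmod[of "a - b"] by (simp add: dist_norm)

lemma lsc_on_uminus_if_usc:
  assumes "\<And>x b. x \<in> K \<Longrightarrow> u x < b \<Longrightarrow> \<exists>e>0. \<forall>x'\<in>K. dist x' x < e \<longrightarrow> u x' < b"
  shows "lsc_on K (\<lambda>x. - u x)"
  unfolding lsc_on_def openin_euclidean_subtopology_iff
proof (intro allI conjI ballI)
  fix a x assume "x \<in> {x \<in> K. - u x > a}"
  then obtain e where "e > 0" "\<forall>x'\<in>K. dist x' x < e \<longrightarrow> u x' < - a"
    using assms[of x "- a"] by auto
  then show "\<exists>e>0. \<forall>x'\<in>K. dist x' x < e \<longrightarrow> x' \<in> {x \<in> K. - u x > a}"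
    by force
qed auto

section \<open>The jump game and the jump index\<close>

text \<open>One round of the game: the opponent chooses \<open>\<delta> > 0\<close>, the player moves to a point \<open>y\<close> that is
  \<open>\<delta>\<close>-close to \<open>x\<close> and commits to a margin \<open>h > 0\<close>; the opponent chooses \<open>\<delta>' > 0\<close>, the player
  jumps to a point \<open>z\<close> that is \<open>\<delta>'\<close>-close to \<open>y\<close> with \<open>g z > g y + h\<close>.\<close>

definition jump_move :: "'a::metric_space set \<Rightarrow> ('a \<Rightarrow> real) \<Rightarrow> 'a \<Rightarrow> ('a \<Rightarrow> real \<Rightarrow> bool) \<Rightarrow> bool"
  where "jump_move K g x P \<longleftrightarrow>
    (\<forall>\<delta>>0. \<exists>y\<in>K. dist y x < \<delta> \<and>
      (\<exists>h>0. \<forall>\<delta>'>0. \<exists>z\<in>K. dist z y < \<delta>' \<and> g y + h < g z \<and> P z (g z - g y)))"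

lemma jump_move_mono [mono]:
  "(\<And>z a. P z a \<longrightarrow> Q z a) \<Longrightarrow> jump_move K g x P \<longrightarrow> jump_move K g x Q"
  unfolding jump_move_def by meson

lemma jump_move_from_nearby:
  assumes "\<And>\<delta>. \<delta> > 0 \<Longrightarrow> \<exists>x'. dist x' x < \<delta> \<and> jump_move K g x' P"
  shows "jump_move K g x P"
  unfolding jump_move_def
proof (intro allI impI)
  fix \<delta> :: real assume "\<delta> > 0"
  then obtain x' where x': "dist x' x < \<delta>/2" "jump_move K g x' P"
    using assms[of "\<delta>/2"] by auto
  from x'(2) \<open>\<delta> > 0\<close> obtain y where "y \<in> K" "dist y x' < \<delta>/2"
    and "\<exists>h>0. \<forall>\<delta>'>0. \<exists>z\<in>K. dist z y < \<delta>' \<and> g y + h < g z \<and> P z (g z - g y)"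
    unfolding jump_move_def by (metis half_gt_zero)
  moreover have "dist y x < \<delta>"
    using dist_triangle[of y x x'] \<open>dist y x' < \<delta>/2\<close> x'(1) by linarith
  ultimately show "\<exists>y\<in>K. dist y x < \<delta> \<and>
      (\<exists>h>0. \<forall>\<delta>'>0. \<exists>z\<in>K. dist z y < \<delta>' \<and> g y + h < g z \<and> P z (g z - g y))"
    by blast
qed

inductive jump_game_won :: "'a::metric_space set \<Rightarrow> ('a \<Rightarrow> real) \<Rightarrow> 'a \<Rightarrow> real \<Rightarrow> bool"
  for K g where
  exhausted: "s < 0 \<Longrightarrow> jump_game_won K g x s"
| jump: "jump_move K g x (\<lambda>z a. jump_game_won K g z (s - a)) \<Longrightarrow> jump_game_won K g x s"

lemma jump_game_won_mono:
  "jump_game_won K g x s \<Longrightarrow> s' \<le> s \<Longrightarrow> jump_game_won K g x s'"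
proof (induction arbitrary: s' rule: jump_game_won.induct)
  case (exhausted s x)
  then show ?case by (simp add: jump_game_won.exhausted)
next
  case (jump x s)
  have "jump_move K g x (\<lambda>z a. jump_game_won K g z (s' - a))"
    using jump_move_mono[rule_format, OF _ jump.IH] jump.prems by force
  then show ?case by (rule jump_game_won.jump)
qed

lemma jump_game_won_nonnegD:
  "jump_game_won K g x s \<Longrightarrow> 0 \<le> s \<Longrightarrow> jump_move K g x (\<lambda>z a. jump_game_won K g z (s - a))"
  by (auto elim: jump_game_won.cases)

lemma jump_game_won_from_nearby:
  assumes "0 \<le> s" and "\<And>\<delta>. \<delta> > 0 \<Longrightarrow> \<exists>x'. dist x' x < \<delta> \<and> jump_game_won K g x' s"
  shows "jump_game_won K g x s"
proof (intro jump_game_won.jump jump_move_from_nearby)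
  fix \<delta> :: real assume "\<delta> > 0"
  then obtain x' where "dist x' x < \<delta>" "jump_game_won K g x' s" using assms(2) by blast
  then show "\<exists>x'. dist x' x < \<delta> \<and> jump_move K g x' (\<lambda>z a. jump_game_won K g z (s - a))"
    using jump_game_won_nonnegD assms(1) by blast
qed

definition jump_index :: "'a::metric_space set \<Rightarrow> ('a \<Rightarrow> real) \<Rightarrow> 'a \<Rightarrow> real" where
  "jump_index K g x = Sup {s. jump_game_won K g x s}"

context
  fixes K :: "'a::metric_space set" and g :: "'a \<Rightarrow> real" and C :: real
  assumes lost: "\<And>x. x \<in> K \<Longrightarrow> \<not> jump_game_won K g x C"
begin

lemma jump_index_bdd_above: "x \<in> K \<Longrightarrow> bdd_above {s. jump_game_won K g x s}"
proof (rule bdd_aboveI)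
  fix s assume "x \<in> K" "s \<in> {s. jump_game_won K g x s}"
  then show "s \<le> C"
    using lost jump_game_won_mono[of K g x s C] by (cases "C \<le> s") auto
qed

lemma jump_game_won_le_jump_index: "x \<in> K \<Longrightarrow> jump_game_won K g x s \<Longrightarrow> s \<le> jump_index K g x"
  unfolding jump_index_def by (rule cSup_upper) (auto simp: jump_index_bdd_above)

lemma jump_game_won_below_jump_index:
  assumes "s < jump_index K g x" shows "jump_game_won K g x s"
proof -
  have "jump_game_won K g x (-1)" by (simp add: jump_game_won.exhausted)
  then have "{s. jump_game_won K g x s} \<noteq> {}" by blast
  from less_cSupD[OF this assms[unfolded jump_index_def]]
  obtain s' where "jump_game_won K g x s'" "s < s'" by blast
  then show ?thesis by (simp add: jump_game_won_mono)
qed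

lemma jump_index_nonneg:
  assumes "x \<in> K" shows "0 \<le> jump_index K g x"
proof (rule ccontr)
  assume "\<not> 0 \<le> jump_index K g x"
  then have "jump_game_won K g x (jump_index K g x / 2)"
    by (simp add: jump_game_won.exhausted)
  then have "jump_index K g x / 2 \<le> jump_index K g x"
    using jump_game_won_le_jump_index[OF assms] by blast
  with \<open>\<not> 0 \<le> jump_index K g x\<close> show False by linarith
qed

lemma jump_index_le:
  assumes "x \<in> K" shows "jump_index K g x \<le> C"
proof (rule ccontr)
  assume "\<not> jump_index K g x \<le> C"
  then have "jump_game_won K g x C" by (simp add: jump_game_won_below_jump_index)
  with lost[OF assms] show False by contradiction
qed

lemma jump_index_usc:
  assumes x: "x \<in> K" and b: "jump_index K g x < b"
  shows "\<exists>e>0. \<forall>x'\<in>K. dist x' x < e \<longrightarrow> jump_index K g x' < b"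
proof -
  define s where "s = (jump_index K g x + b) / 2"
  have "0 \<le> s" using jump_index_nonneg[OF x] b unfolding s_def by simp
  moreover have "\<not> jump_game_won K g x s"
    using jump_game_won_le_jump_index[OF x] b unfolding s_def by force
  ultimately have "\<not> (\<forall>\<delta>>0. \<exists>x'. dist x' x < \<delta> \<and> jump_game_won K g x' s)"
    using jump_game_won_from_nearby by blast
  then obtain e where "e > 0" and lost_near: "\<And>x'. dist x' x < e \<Longrightarrow> \<not> jump_game_won K g x' s"
    by auto
  have "jump_index K g x' < b" if "dist x' x < e" for x'
  proof -
    have "jump_index K g x' \<le> s"
      using lost_near[OF that] jump_game_won_below_jump_index by (meson not_le)
    then show ?thesis using b unfolding s_def by (simp add: field_simps)
  qed
  then show ?thesis using \<open>e > 0\<close> by blast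
qed

lemma jump_index_plus_usc:
  assumes y: "y \<in> K" and b: "jump_index K g y + g y < b"
  shows "\<exists>e>0. \<forall>z\<in>K. dist z y < e \<longrightarrow> jump_index K g z + g z < b"
proof -
  define \<epsilon> where "\<epsilon> = b - jump_index K g y - g y"
  have "\<epsilon> > 0" using b unfolding \<epsilon>_def by simp
  have b_eq: "b = jump_index K g y + g y + \<epsilon>" unfolding \<epsilon>_def by simp
  define s where "s = jump_index K g y + \<epsilon>/4"
  have "0 \<le> s" using jump_index_nonneg[OF y] \<open>\<epsilon> > 0\<close> unfolding s_def by simp
  moreover have "\<not> jump_game_won K g y s"
    using jump_game_won_le_jump_index[OF y] \<open>\<epsilon> > 0\<close> unfolding s_def by force
  ultimately have "\<not> jump_move K g y (\<lambda>z a. jump_game_won K g z (s - a))"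
    using jump_game_won.jump by blast
  \<comment> \<open>In particular, the player cannot win by staying at \<open>y\<close> and committing to the margin \<open>\<epsilon>/4\<close>.\<close>
  then obtain e0 where "e0 > 0" and no_move: "\<And>y'. y' \<in> K \<Longrightarrow> dist y' y < e0 \<Longrightarrow>
      \<not> (\<exists>h>0. \<forall>\<delta>'>0. \<exists>z\<in>K. dist z y' < \<delta>' \<and> g y' + h < g z \<and>
        jump_game_won K g z (s - (g z - g y')))"
    unfolding jump_move_def by blast
  have "\<not> (\<forall>\<delta>'>0. \<exists>z\<in>K. dist z y < \<delta>' \<and> g y + \<epsilon>/4 < g z \<and>
        jump_game_won K g z (s - (g z - g y)))"
    using no_move[OF y] \<open>e0 > 0\<close> \<open>\<epsilon> > 0\<close> by simp
  then obtain e1 where "e1 > 0" and far: "\<And>z. z \<in> K \<Longrightarrow> dist z y < e1 \<Longrightarrow> g y + \<epsilon>/4 < g z \<Longrightarrow>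
      \<not> jump_game_won K g z (s - (g z - g y))"
    by blast
  obtain e2 where "e2 > 0" and
    near: "\<And>z. z \<in> K \<Longrightarrow> dist z y < e2 \<Longrightarrow> jump_index K g z < jump_index K g y + \<epsilon>/2"
    using jump_index_usc[OF y, of "jump_index K g y + \<epsilon>/2"] \<open>\<epsilon> > 0\<close> by auto
  have "jump_index K g z + g z < b" if z: "z \<in> K" "dist z y < min e1 e2" for z
  proof (cases "g y + \<epsilon>/4 < g z")
    case True
    then have "jump_index K g z \<le> s - (g z - g y)"
      using far z jump_game_won_below_jump_index by (meson min_less_iff_conj not_le)
    then show ?thesis using \<open>\<epsilon> > 0\<close> unfolding s_def b_eq by linarith
  next
    case False
    moreover have "jump_index K g z < jump_index K g y + \<epsilon>/2" using near z by simp
    ultimately show ?thesis using \<open>\<epsilon> > 0\<close> unfolding b_eq by linarith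
  qed
  then show ?thesis using \<open>e1 > 0\<close> \<open>e2 > 0\<close> by (intro exI[of _ "min e1 e2"]) auto
qed

end

lemma lsc_difference_if_jump_game_lost:
  fixes g :: "'a::metric_space \<Rightarrow> real"
  assumes lost: "\<forall>x\<in>K. \<not> jump_game_won K g x C"
    and g_bounded: "\<forall>x\<in>K. \<bar>g x\<bar> \<le> B"
  shows "\<exists>u v. lsc_on K u \<and> lsc_on K v \<and> bounded (u ` K) \<and> bounded (v ` K) \<and>
    (\<forall>x\<in>K. g x = u x - v x)"
proof (intro exI conjI)
  let ?V = "jump_index K g"
  show "lsc_on K (\<lambda>x. - ?V x)"
    by (rule lsc_on_uminus_if_usc) (rule jump_index_usc[OF lost[rule_format]])
  show "lsc_on K (\<lambda>x. - (?V x + g x))"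
    by (rule lsc_on_uminus_if_usc) (rule jump_index_plus_usc[OF lost[rule_format]])
  have "bounded (?V ` K)"
    unfolding bounded_iff using jump_index_nonneg[OF lost[rule_format]] jump_index_le[OF lost[rule_format]]
    by (intro exI[of _ C]) auto
  moreover have "bounded ((\<lambda>x. ?V x + g x) ` K)"
    unfolding bounded_iff
  proof (intro exI[of _ "C + B"] ballI)
    fix v assume "v \<in> (\<lambda>x. ?V x + g x) ` K"
    then obtain x where "x \<in> K" "v = ?V x + g x" by blast
    moreover from \<open>x \<in> K\<close> have "0 \<le> ?V x" "?V x \<le> C" "\<bar>g x\<bar> \<le> B"
      using jump_index_nonneg[OF lost[rule_format]] jump_index_le[OF lost[rule_format]] g_bounded
      by auto
    ultimately show "norm v \<le> C + B" by simp
  qed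
  ultimately show "bounded ((\<lambda>x. - ?V x) ` K)" "bounded ((\<lambda>x. - (?V x + g x)) ` K)"
    by (simp_all only: uminus_bounded_comp)
qed simp

lemma jump_game_unbounded_if_not_D:
  fixes f :: "'a::metric_space \<Rightarrow> complex"
  assumes "f \<notin> D_K K" and f_bounded: "\<And>x. x \<in> K \<Longrightarrow> norm (f x) \<le> B"
  shows "\<exists>c. norm c = 1 \<and> (\<forall>M. \<exists>x\<in>K. jump_game_won K (\<lambda>x. Re (c * f x)) x M)"
proof (rule ccontr)
  assume "\<not> ?thesis"
  then have "\<exists>M. \<forall>x\<in>K. \<not> jump_game_won K (\<lambda>x. Re (c * f x)) x M" if "norm c = 1" for c
    using that by blast
  from this[of 1] this[of "- \<i>"] obtain C1 C2 where
    lost1: "\<forall>x\<in>K. \<not> jump_game_won K (\<lambda>x. Re (f x)) x C1" and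
    lost2: "\<forall>x\<in>K. \<not> jump_game_won K (\<lambda>x. Im (f x)) x C2"
    by auto
  have "\<bar>Re (f x)\<bar> \<le> B" "\<bar>Im (f x)\<bar> \<le> B" if "x \<in> K" for x
    using abs_Re_le_cmod[of "f x"] abs_Im_le_cmod[of "f x"] f_bounded[OF that] by linarith+
  then have Re_bound: "\<forall>x\<in>K. \<bar>Re (f x)\<bar> \<le> B" and Im_bound: "\<forall>x\<in>K. \<bar>Im (f x)\<bar> \<le> B"
    by auto
  obtain u1 u2 where u12: "lsc_on K u1" "lsc_on K u2" "bounded (u1 ` K)" "bounded (u2 ` K)"
      "\<forall>x\<in>K. Re (f x) = u1 x - u2 x"
    using lsc_difference_if_jump_game_lost[OF lost1 Re_bound] by blast
  obtain u3 u4 where u34: "lsc_on K u3" "lsc_on K u4" "bounded (u3 ` K)" "bounded (u4 ` K)"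
      "\<forall>x\<in>K. Im (f x) = u3 x - u4 x"
    using lsc_difference_if_jump_game_lost[OF lost2 Im_bound] by blast
  have "f \<in> D_K K"
    unfolding D_K_def
    by (rule CollectI, intro exI[of _ u1] exI[of _ u2] exI[of _ u3] exI[of _ u4] conjI)
      (use u12 u34 in \<open>simp_all add: complex_eq_iff\<close>)
  with assms(1) show False by contradiction
qed

section \<open>Winning strategies\<close>

text \<open>A strategy answers the radii \<open>\<delta>\<close> and \<open>\<delta>'\<close> of the opponent with the point \<open>y \<delta>\<close>, the margin
  \<open>h \<delta>\<close>, the landing point \<open>z \<delta> \<delta>'\<close> and the continuation \<open>\<sigma> \<delta> \<delta>'\<close>.  A play is thus determined by the
  radii alone, and it terminates because strategies form a datatype.\<close>

datatype 'a jump_strategy = Stop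
  | Move "real \<Rightarrow> 'a" "real \<Rightarrow> real" "real \<Rightarrow> real \<Rightarrow> 'a" "real \<Rightarrow> real \<Rightarrow> 'a jump_strategy"

inductive strategy_wins :: "'a::metric_space set \<Rightarrow> ('a \<Rightarrow> real) \<Rightarrow> 'a \<Rightarrow> real \<Rightarrow> 'a jump_strategy \<Rightarrow> bool"
  for K g where
  stop: "s < 0 \<Longrightarrow> strategy_wins K g x s Stop"
| move: "(\<And>\<delta>. \<delta> > 0 \<Longrightarrow> y \<delta> \<in> K \<and> dist (y \<delta>) x < \<delta> \<and> 0 < h \<delta> \<and>
      (\<forall>\<delta>'>0. z \<delta> \<delta>' \<in> K \<and> dist (z \<delta> \<delta>') (y \<delta>) < \<delta>' \<and> g (y \<delta>) + h \<delta> < g (z \<delta> \<delta>') \<and>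
         strategy_wins K g (z \<delta> \<delta>') (s - (g (z \<delta> \<delta>') - g (y \<delta>))) (\<sigma> \<delta> \<delta>')))
    \<Longrightarrow> strategy_wins K g x s (Move y h z \<sigma>)"

lemma jump_game_won_imp_strategy:
  "jump_game_won K g x s \<Longrightarrow> \<exists>\<sigma>. strategy_wins K g x s \<sigma>"
proof (induction rule: jump_game_won.induct)
  case (exhausted s x)
  then show ?case by (blast intro: strategy_wins.stop)
next
  case (jump x s)
  then have "\<forall>\<delta>. \<exists>y h. \<delta> > 0 \<longrightarrow> y \<in> K \<and> dist y x < \<delta> \<and> 0 < h \<and>
      (\<forall>\<delta>'. \<exists>z \<sigma>. \<delta>' > 0 \<longrightarrow> z \<in> K \<and> dist z y < \<delta>' \<and> g y + h < g z \<and>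
        strategy_wins K g z (s - (g z - g y)) \<sigma>)"
    unfolding jump_move_def by (metis (no_types, lifting))
  then obtain y h where yh: "\<And>\<delta>. \<delta> > 0 \<Longrightarrow> y \<delta> \<in> K \<and> dist (y \<delta>) x < \<delta> \<and> 0 < h \<delta> \<and>
      (\<forall>\<delta>'. \<exists>z \<sigma>. \<delta>' > 0 \<longrightarrow> z \<in> K \<and> dist z (y \<delta>) < \<delta>' \<and> g (y \<delta>) + h \<delta> < g z \<and>
        strategy_wins K g z (s - (g z - g (y \<delta>))) \<sigma>)"
    unfolding choice_iff by blast
  then have "\<forall>\<delta> \<delta>'. \<exists>z \<sigma>. \<delta> > 0 \<longrightarrow> \<delta>' > 0 \<longrightarrow> z \<in> K \<and> dist z (y \<delta>) < \<delta>' \<and> g (y \<delta>) + h \<delta> < g z \<and>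
        strategy_wins K g z (s - (g z - g (y \<delta>))) \<sigma>"
    by blast
  then obtain z \<sigma> where "\<And>\<delta> \<delta>'. \<delta> > 0 \<Longrightarrow> \<delta>' > 0 \<Longrightarrow> z \<delta> \<delta>' \<in> K \<and> dist (z \<delta> \<delta>') (y \<delta>) < \<delta>' \<and>
      g (y \<delta>) + h \<delta> < g (z \<delta> \<delta>') \<and> strategy_wins K g (z \<delta> \<delta>') (s - (g (z \<delta> \<delta>') - g (y \<delta>))) (\<sigma> \<delta> \<delta>')"
    unfolding choice_iff by blast
  with yh show ?case by (blast intro: strategy_wins.move)
qed

lemma strategy_wins_StopD: "strategy_wins K g x s Stop \<Longrightarrow> s < 0"
  by (cases rule: strategy_wins.cases) auto

lemma strategy_wins_MoveD:
  assumes "strategy_wins K g x s (Move y h z \<sigma>)" and "\<delta> > 0"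
  shows "y \<delta> \<in> K" "dist (y \<delta>) x < \<delta>" "0 < h \<delta>"
    and "\<And>\<delta>'. \<delta>' > 0 \<Longrightarrow> z \<delta> \<delta>' \<in> K \<and> dist (z \<delta> \<delta>') (y \<delta>) < \<delta>' \<and> g (y \<delta>) + h \<delta> < g (z \<delta> \<delta>') \<and>
      strategy_wins K g (z \<delta> \<delta>') (s - (g (z \<delta> \<delta>') - g (y \<delta>))) (\<sigma> \<delta> \<delta>')"
  using assms by (cases rule: strategy_wins.cases; simp)+

section \<open>Playing a strategy along a subsequence\<close>

text \<open>\<open>tol\<close> is the smallest margin committed to so far; \<open>base_radius\<close> is the radius answered by the
  last base move, which the pending jump needs.\<close>

record 'a play_state =
  point :: 'a
  budget :: real
  strategy :: "'a jump_strategy"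
  tol :: real
  base_radius :: real

definition jump_witness ::
    "(nat \<Rightarrow> 'a \<Rightarrow> complex) \<Rightarrow> (nat \<Rightarrow> nat) \<Rightarrow> real \<Rightarrow> real \<Rightarrow> 'a \<Rightarrow> nat \<Rightarrow> bool" where
  "jump_witness e m M \<kappa> t k \<longleftrightarrow>
     (\<Sum>j=1..k. Re (e (m (2*j)) t)) > M \<and>
     (\<forall>j\<in>{1..k}. Re (e (m (2*j)) t) > 0) \<and>
     (let S = {i. i > 1 \<and> i \<notin> m ` {1..2*k}} in
        (\<lambda>i. norm (e i t)) summable_on S \<and> infsum (\<lambda>i. norm (e i t)) S < \<kappa>)"

lemma jump_witness_mono: "jump_witness e m M \<kappa> t k \<Longrightarrow> \<kappa> \<le> \<kappa>' \<Longrightarrow> jump_witness e m M \<kappa>' t k"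
  unfolding jump_witness_def Let_def by auto

lemma jump_witness_cong:
  assumes "\<And>j. 0 < j \<Longrightarrow> m' j = m j"
  shows "jump_witness e m' M \<kappa> t k = jump_witness e m M \<kappa> t k"
proof -
  have "m' ` {1..2*k} = m ` {1..2*k}" using assms by (intro image_cong) auto
  moreover have "(\<Sum>j=1..k. Re (e (m' (2*j)) t)) = (\<Sum>j=1..k. Re (e (m (2*j)) t))"
    using assms by (intro sum.cong) auto
  ultimately show ?thesis
    using assms unfolding jump_witness_def by auto
qed

locale jump_subsequence =
  fixes K :: "'a::metric_space set" and F :: "nat \<Rightarrow> 'a \<Rightarrow> complex" and f :: "'a \<Rightarrow> complex"
    and \<epsilon> :: real and M :: real and x0 :: 'a and \<sigma>0 :: "'a jump_strategy"
  assumes compact: "compact K"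
    and continuous: "\<And>n. continuous_on K (F n)"
    and converges: "\<And>x. x \<in> K \<Longrightarrow> (\<lambda>n. F n x) \<longlonglongrightarrow> f x"
    and \<epsilon>: "0 < \<epsilon>" "\<epsilon> \<le> 1/12"
    and start: "x0 \<in> K" "strategy_wins K (\<lambda>x. Re (f x)) x0 (M + 1) \<sigma>0"
begin

abbreviation g :: "'a \<Rightarrow> real" where "g x \<equiv> Re (f x)"

definition radius :: "(nat \<Rightarrow> nat) \<Rightarrow> nat \<Rightarrow> real \<Rightarrow> real" where
  "radius r n \<mu> = (SOME d. d > 0 \<and>
     (\<forall>i<n. \<forall>x\<in>K. \<forall>y\<in>K. dist x y < d \<longrightarrow> dist (F (r i) x) (F (r i) y) < \<mu> * \<epsilon> / 2^n))"

lemma radius_spec: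
  assumes "\<mu> > 0"
  shows "radius r n \<mu> > 0 \<and> (\<forall>i<n. \<forall>x\<in>K. \<forall>y\<in>K. dist x y < radius r n \<mu> \<longrightarrow>
    dist (F (r i) x) (F (r i) y) < \<mu> * \<epsilon> / 2^n)"
proof -
  have "\<exists>d>0. \<forall>i\<in>{..<n}. \<forall>x\<in>K. \<forall>y\<in>K. dist x y < d \<longrightarrow> dist (F (r i) x) (F (r i) y) < \<mu> * \<epsilon> / 2^n"
    using assms \<epsilon> by (intro uniform_modulus_finite compact continuous) auto
  then show ?thesis
    unfolding radius_def by (intro someI_ex[where P = "\<lambda>d. d > 0 \<and> _ d"]) auto
qed

lemma radius_pos: "\<mu> > 0 \<Longrightarrow> radius r n \<mu> > 0"
  using radius_spec by blast

lemma dist_lt_radius: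
  "\<mu> > 0 \<Longrightarrow> i < n \<Longrightarrow> x \<in> K \<Longrightarrow> y \<in> K \<Longrightarrow> dist x y < radius r n \<mu> \<Longrightarrow>
    dist (F (r i) x) (F (r i) y) < \<mu> * \<epsilon> / 2^n"
  using radius_spec by blast

lemma radius_cong:
  assumes "\<And>i. i < n \<Longrightarrow> r i = r' i" shows "radius r n \<mu> = radius r' n \<mu>"
  unfolding radius_def by (intro arg_cong[where f = Eps] ext) (simp add: assms)

definition play_step :: "(nat \<Rightarrow> nat) \<Rightarrow> nat \<Rightarrow> nat \<Rightarrow> 'a play_state \<Rightarrow> 'a play_state" where
  "play_step r n j st = (case strategy st of
      Stop \<Rightarrow> st
    | Move y h z \<sigma> \<Rightarrow>
        let \<delta> = radius r n (tol st); d = base_radius st in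
        if even j then st\<lparr>point := y \<delta>, tol := min (tol st) (h \<delta>), base_radius := \<delta>\<rparr>
        else st\<lparr>point := z d \<delta>, budget := budget st - (g (z d \<delta>) - g (point st)),
                strategy := \<sigma> d \<delta>\<rparr>)"

fun state_after :: "(nat \<Rightarrow> nat) \<Rightarrow> nat list \<Rightarrow> 'a play_state" where
  "state_after r [] = \<lparr>point = x0, budget = M + 1, strategy = \<sigma>0, tol = 1, base_radius = 1\<rparr>"
| "state_after r (n # ns) = play_step r n (length ns) (state_after r ns)"

text \<open>Steps at even times are base moves and steps at odd times are jumps, so at odd times a jump
  is pending.\<close>

definition position_ok :: "nat \<Rightarrow> 'a play_state \<Rightarrow> bool" where
  "position_ok j st \<longleftrightarrow> point st \<in> K \<and> 0 < tol st \<and> tol st \<le> 1 \<and>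
     (if even j then strategy_wins K g (point st) (budget st) (strategy st)
      else (\<exists>x. strategy_wins K g x (budget st) (strategy st)) \<and>
        (case strategy st of Stop \<Rightarrow> True | Move y h z \<sigma> \<Rightarrow>
           0 < base_radius st \<and> point st = y (base_radius st) \<and> tol st \<le> h (base_radius st)))"

lemma play_step_base_move:
  fixes r :: "nat \<Rightarrow> nat" and n :: nat
  assumes ok: "position_ok j st" and "even j" and Move: "strategy st = Move y h z \<sigma>"
  defines "st' \<equiv> play_step r n j st"
  shows "position_ok (Suc j) st' \<and> tol st' \<le> tol st \<and> dist (point st') (point st) < radius r n (tol st)"
proof -
  define \<delta> where "\<delta> = radius r n (tol st)"
  have tol: "0 < tol st" "tol st \<le> 1" using ok unfolding position_ok_def by auto
  then have "\<delta> > 0" unfolding \<delta>_def by (intro radius_pos)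
  have wins: "strategy_wins K g (point st) (budget st) (Move y h z \<sigma>)"
    using ok Move \<open>even j\<close> unfolding position_ok_def by simp
  have st': "st' = st\<lparr>point := y \<delta>, tol := min (tol st) (h \<delta>), base_radius := \<delta>\<rparr>"
    unfolding st'_def play_step_def Move \<delta>_def using \<open>even j\<close> by (simp add: Let_def)
  show ?thesis
    using strategy_wins_MoveD[OF wins \<open>\<delta> > 0\<close>] wins tol \<open>\<delta> > 0\<close> \<open>even j\<close> Move
    unfolding st' position_ok_def \<delta>_def by auto
qed

lemma play_step_jump:
  fixes r :: "nat \<Rightarrow> nat" and n :: nat
  assumes ok: "position_ok j st" and "odd j" and Move: "strategy st = Move y h z \<sigma>"
  defines "st' \<equiv> play_step r n j st"
  shows "position_ok (Suc j) st' \<and> tol st' \<le> tol st \<and> dist (point st') (point st) < radius r n (tol st)"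
proof -
  define \<delta> where "\<delta> = radius r n (tol st)"
  define d where "d = base_radius st"
  have tol: "0 < tol st" "tol st \<le> 1" using ok unfolding position_ok_def by auto
  then have "\<delta> > 0" unfolding \<delta>_def by (intro radius_pos)
  obtain x where wins: "strategy_wins K g x (budget st) (Move y h z \<sigma>)"
    and d: "0 < d" "point st = y d" "tol st \<le> h d"
    using ok Move \<open>odd j\<close> unfolding position_ok_def d_def by auto
  have st': "st' = st\<lparr>point := z d \<delta>, budget := budget st - (g (z d \<delta>) - g (point st)),
      strategy := \<sigma> d \<delta>\<rparr>"
    unfolding st'_def play_step_def Move \<delta>_def d_def using \<open>odd j\<close> by (simp add: Let_def)
  show ?thesis
    using strategy_wins_MoveD(4)[OF wins d(1) \<open>\<delta> > 0\<close>] d tol \<open>odd j\<close>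
    unfolding st' position_ok_def \<delta>_def by auto
qed

lemma play_step_ok:
  fixes r :: "nat \<Rightarrow> nat" and n :: nat
  assumes ok: "position_ok j st"
  defines "st' \<equiv> play_step r n j st"
  shows "position_ok (Suc j) st' \<and> tol st' \<le> tol st \<and> dist (point st') (point st) < radius r n (tol st)"
proof (cases "strategy st")
  case Stop
  then have "budget st < 0"
    using ok unfolding position_ok_def by (auto split: if_splits dest: strategy_wins_StopD)
  moreover have "st' = st" unfolding st'_def play_step_def Stop by simp
  moreover have "0 < radius r n (tol st)"
    using ok unfolding position_ok_def by (auto intro: radius_pos)
  ultimately show ?thesis
    using ok Stop unfolding position_ok_def by (auto intro: strategy_wins.stop)
next
  case (Move y h z \<sigma>)
  then show ?thesis
    using play_step_base_move[OF ok _ Move] play_step_jump[OF ok _ Move] unfolding st'_def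
    by (cases "even j") auto
qed

lemma budget_play_step:
  "budget (play_step r n j st) =
     budget st - (if even j then 0 else g (point (play_step r n j st)) - g (point st))"
  by (auto simp: play_step_def Let_def split: jump_strategy.split)

lemma play_round:
  fixes r :: "nat \<Rightarrow> nat" and n n' :: nat
  assumes ok: "position_ok j st" and "even j" and "0 \<le> budget st"
  defines "st1 \<equiv> play_step r n j st" and "st2 \<equiv> play_step r n' (Suc j) (play_step r n j st)"
  shows "g (point st1) + tol st1 < g (point st2)" and "tol st2 = tol st1"
    and "\<exists>y h z \<sigma> a b. strategy st = Move y h z \<sigma> \<and> strategy st2 = \<sigma> a b"
proof -
  have wins: "strategy_wins K g (point st) (budget st) (strategy st)"
    using ok \<open>even j\<close> unfolding position_ok_def by simp
  then obtain y h z \<sigma> where Move: "strategy st = Move y h z \<sigma>"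
    using \<open>0 \<le> budget st\<close> strategy_wins_StopD by (cases "strategy st") fastforce+
  have tol: "0 < tol st" using ok unfolding position_ok_def by simp
  define \<delta> where "\<delta> = radius r n (tol st)"
  have "\<delta> > 0" unfolding \<delta>_def by (rule radius_pos[OF tol])
  have st1: "st1 = st\<lparr>point := y \<delta>, tol := min (tol st) (h \<delta>), base_radius := \<delta>\<rparr>"
    unfolding st1_def play_step_def Move \<delta>_def using \<open>even j\<close> by (simp add: Let_def)
  define \<delta>' where "\<delta>' = radius r n' (tol st1)"
  have "\<delta>' > 0" unfolding \<delta>'_def st1 using tol strategy_wins_MoveD(3)[OF wins[unfolded Move] \<open>\<delta> > 0\<close>]
    by (intro radius_pos) simp
  have st2: "st2 = st1\<lparr>point := z \<delta> \<delta>', budget := budget st1 - (g (z \<delta> \<delta>') - g (point st1)),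
                strategy := \<sigma> \<delta> \<delta>'\<rparr>"
    unfolding st2_def st1_def[symmetric] play_step_def \<delta>'_def using \<open>even j\<close> by (simp add: st1 Move Let_def \<delta>_def)
  have "g (y \<delta>) + h \<delta> < g (z \<delta> \<delta>')"
    using strategy_wins_MoveD(4)[OF wins[unfolded Move] \<open>\<delta> > 0\<close> \<open>\<delta>' > 0\<close>] by blast
  then show "g (point st1) + tol st1 < g (point st2)"
    unfolding st2 by (simp add: st1)
  show "tol st2 = tol st1" unfolding st2 by simp
  show "\<exists>y h z \<sigma> a b. strategy st = Move y h z \<sigma> \<and> strategy st2 = \<sigma> a b"
    unfolding st2 using Move by auto
qed

lemma state_after_ok: "position_ok (length L) (state_after r L)"
proof (induction L)
  case Nil
  show ?case using start unfolding position_ok_def by simp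
next
  case (Cons n L)
  then show ?case using play_step_ok by simp
qed

lemma play_step_cong:
  assumes "\<And>i. i < n \<Longrightarrow> r i = r' i" shows "play_step r n j st = play_step r' n j st"
proof -
  have "radius r n \<mu> = radius r' n \<mu>" for \<mu>
    using assms by (rule radius_cong)
  then show ?thesis unfolding play_step_def by (simp split: jump_strategy.split)
qed

lemma state_after_cong:
  "(\<And>i. i < n \<Longrightarrow> r i = r' i) \<Longrightarrow> set L \<subseteq> {..n} \<Longrightarrow> state_after r L = state_after r' L"
proof (induction L)
  case Nil
  then show ?case by simp
next
  case (Cons a L)
  then show ?case using play_step_cong[of a r r'] by simp
qed

text \<open>The positions reachable with indices at most \<open>n\<close> depend only on \<open>r 0, \<dots>, r (n - 1)\<close>, so the
  subsequence can be chosen by dependent choice such that \<open>F (r n)\<close> approximates \<open>f\<close> at all of them.\<close>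

definition histories :: "nat \<Rightarrow> nat list set" where
  "histories n = {L. set L \<subseteq> {..n} \<and> length L \<le> n}"

definition good_index :: "(nat \<Rightarrow> nat) \<Rightarrow> nat \<Rightarrow> nat \<Rightarrow> bool" where
  "good_index r n N \<longleftrightarrow> (\<forall>i<n. r i < N) \<and>
     (\<forall>L\<in>histories n. dist (F N (point (state_after r L))) (f (point (state_after r L)))
        < tol (state_after r L) * \<epsilon> / 2^n)"

lemma good_index_exists: "\<exists>N. good_index r n N"
proof -
  have "eventually (\<lambda>N. dist (F N (point (state_after r L))) (f (point (state_after r L)))
      < tol (state_after r L) * \<epsilon> / 2^n) sequentially" for L
  proof -
    have "point (state_after r L) \<in> K" "0 < tol (state_after r L)"
      using state_after_ok[of L r] unfolding position_ok_def by auto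
    then show ?thesis
      using converges \<epsilon> by (intro tendstoD) auto
  qed
  moreover have "finite (histories n)"
    unfolding histories_def by (rule finite_lists_length_le) simp
  ultimately have "eventually (\<lambda>N. \<forall>L\<in>histories n.
      dist (F N (point (state_after r L))) (f (point (state_after r L))) < tol (state_after r L) * \<epsilon> / 2^n)
      sequentially"
    by (intro eventually_ball_finite) blast+
  moreover have "eventually (\<lambda>N. \<forall>i<n. r i < N) sequentially"
    using eventually_ball_finite[of "{..<n}" "\<lambda>N i. r i < N" sequentially] by (simp add: lessThan_def)
  ultimately have "eventually (good_index r n) sequentially"
    unfolding good_index_def by (rule eventually_conj[rotated])
  then obtain N0 where "\<forall>N\<ge>N0. good_index r n N"
    unfolding eventually_sequentially by blast
  then show ?thesis by blast
qed

lemma good_index_cong: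
  assumes "\<And>i. i < n \<Longrightarrow> r i = r' i" shows "good_index r n N = good_index r' n N"
proof -
  have "state_after r L = state_after r' L" if "L \<in> histories n" for L
    using assms that unfolding histories_def by (intro state_after_cong[of n]) auto
  then show ?thesis
    using assms unfolding good_index_def by auto
qed

lemma good_subsequence_exists: "\<exists>r. \<forall>n. good_index r n (r n)"
  using good_index_cong good_index_exists by (intro dependent_wellorder_choice) blast+

context
  fixes r m :: "nat \<Rightarrow> nat"
  assumes good: "\<And>n. good_index r n (r n)" and m: "strict_mono m" "m 0 = 0"
begin

definition play :: "nat \<Rightarrow> 'a play_state" where
  "play j = state_after r (rev (map m [1..<Suc j]))"

lemma play_0: "play 0 = \<lparr>point = x0, budget = M + 1, strategy = \<sigma>0, tol = 1, base_radius = 1\<rparr>"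
  by (simp add: play_def)

lemma play_Suc: "play (Suc j) = play_step r (m (Suc j)) j (play j)"
proof -
  have "rev (map m [1..<Suc (Suc j)]) = m (Suc j) # rev (map m [1..<Suc j])" by simp
  then show ?thesis unfolding play_def by (simp del: upt_Suc)
qed

lemma play_ok: "position_ok j (play j)"
  using state_after_ok[of "rev (map m [1..<Suc j])" r] by (simp add: play_def del: upt_Suc)

lemma play_point: "point (play j) \<in> K" and play_tol: "0 < tol (play j)" "tol (play j) \<le> 1"
  using play_ok[of j] unfolding position_ok_def by auto

lemma tol_play_antimono: "j \<le> j' \<Longrightarrow> tol (play j') \<le> tol (play j)"
proof (induction j' rule: dec_induct)
  case (step j')
  have "tol (play (Suc j')) \<le> tol (play j')"
    using play_step_ok[OF play_ok, of j' r "m (Suc j')"] by (simp add: play_Suc)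
  with step.IH show ?case by linarith
qed simp

lemma play_step_small:
  assumes "i < m (Suc j)"
  shows "dist (F (r i) (point (play (Suc j)))) (F (r i) (point (play j)))
    < tol (play j) * \<epsilon> * (1/2) ^ m (Suc j)"
proof -
  have "dist (point (play (Suc j))) (point (play j)) < radius r (m (Suc j)) (tol (play j))"
    using play_step_ok[OF play_ok, of j r "m (Suc j)"] by (simp add: play_Suc)
  from dist_lt_radius[OF play_tol(1) assms play_point play_point this] show ?thesis
    by (simp add: power_one_over)
qed

lemma drift_sum:
  assumes "j \<le> J" "i < m (Suc j)"
  shows "dist (F (r i) (point (play J))) (F (r i) (point (play j)))
    \<le> tol (play j) * \<epsilon> * (\<Sum>l=Suc j..J. (1/2) ^ m l)"
  using assms(1)
proof (induction J rule: dec_induct)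
  case (step J)
  have "m (Suc j) \<le> m (Suc J)"
    using step.hyps(1) m(1) by (simp add: strict_mono_less_eq)
  then have "dist (F (r i) (point (play (Suc J)))) (F (r i) (point (play J)))
      < tol (play J) * \<epsilon> * (1/2) ^ m (Suc J)"
    using assms(2) by (intro play_step_small) simp
  also have "\<dots> \<le> tol (play j) * \<epsilon> * (1/2) ^ m (Suc J)"
    using tol_play_antimono[OF step.hyps(1)] \<epsilon> by (simp add: mult_right_mono)
  finally show ?case
    using step.IH dist_triangle[of "F (r i) (point (play (Suc J)))" "F (r i) (point (play j))"
        "F (r i) (point (play J))"] step.hyps(1)
    by (simp add: algebra_simps)
qed simp

lemma drift_bound:
  assumes "j \<le> J" "i < m (Suc j)"
  shows "dist (F (r i) (point (play J))) (F (r i) (point (play j))) \<le> tol (play j) * \<epsilon> * (1/2) ^ i"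
proof -
  have "(\<Sum>l=Suc j..J. (1/2::real) ^ m l) \<le> (1/2) ^ i"
  proof (rule sum_power_half_le)
    show "inj_on m {Suc j..J}" using m(1) by (rule strict_mono_imp_inj_on)
    show "i < m l" if "l \<in> {Suc j..J}" for l
      using that assms(2) m(1) strict_mono_less_eq[of m "Suc j" l] by auto
  qed simp
  then have "tol (play j) * \<epsilon> * (\<Sum>l=Suc j..J. (1/2) ^ m l) \<le> tol (play j) * \<epsilon> * (1/2) ^ i"
    using play_tol(1)[of j] \<epsilon> by (intro mult_left_mono) auto
  with drift_sum[OF assms] show ?thesis by linarith
qed

lemma approx_at_play:
  assumes "m j \<le> i"
  shows "dist (F (r i) (point (play j))) (f (point (play j))) < tol (play j) * \<epsilon> * (1/2) ^ i"
proof -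
  have "m l \<le> i" if "l \<le> j" for l
    using that assms m(1) strict_mono_less_eq[of m l j] by auto
  moreover have "j \<le> i"
    using strict_mono_imp_increasing[OF m(1), of j] assms by linarith
  ultimately have "rev (map m [1..<Suc j]) \<in> histories i"
    unfolding histories_def by auto
  then show ?thesis
    using good[of i] unfolding good_index_def play_def by (simp add: power_one_over)
qed

text \<open>Typically \<open>j\<close> is the last time with \<open>m j \<le> i\<close>: at that time \<open>F (r i)\<close> approximates \<open>f\<close>,
  and afterwards the play moves too little to change \<open>F (r i)\<close> much.\<close>

lemma close_to_active:
  assumes "j \<le> J" "m j \<le> i" "j < J \<Longrightarrow> i < m (Suc j)"
  shows "dist (F (r i) (point (play J))) (f (point (play j))) \<le> 2 * (tol (play j) * \<epsilon> * (1/2) ^ i)"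
proof (cases "j < J")
  case True
  then show ?thesis
    using drift_bound[OF assms(1) assms(3)[OF True]] approx_at_play[OF assms(2)]
      dist_triangle[of "F (r i) (point (play J))" "f (point (play j))" "F (r i) (point (play j))"]
    by simp
next
  case False
  then have "j = J" using assms(1) by simp
  moreover have "0 < tol (play j) * \<epsilon> * (1/2) ^ i" using play_tol(1)[of j] \<epsilon> by simp
  ultimately show ?thesis using approx_at_play[OF assms(2)] by simp
qed

lemma active_time_exists: "\<exists>j\<le>J. m j \<le> i \<and> (j < J \<longrightarrow> i < m (Suc j))"
proof (induction J)
  case 0
  then show ?case using m(2) by simp
next
  case (Suc J)
  then obtain j where j: "j \<le> J" "m j \<le> i" "j < J \<longrightarrow> i < m (Suc j)" by blast
  show ?case
  proof (cases "i < m (Suc J)")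
    case True
    with j show ?thesis by (intro exI[of _ j]) (auto simp: less_Suc_eq)
  next
    case False
    then show ?thesis by (intro exI[of _ "Suc J"]) simp
  qed
qed

lemma play_round_at:
  assumes "0 \<le> budget (play (2 * k))"
  shows "g (point (play (Suc (2 * k)))) + tol (play (Suc (2 * k))) < g (point (play (2 * Suc k)))"
    and "tol (play (2 * Suc k)) = tol (play (Suc (2 * k)))"
    and "\<exists>y h z \<sigma> a b. strategy (play (2 * k)) = Move y h z \<sigma> \<and> strategy (play (2 * Suc k)) = \<sigma> a b"
  using play_round[OF play_ok[of "2 * k"] _ assms, where r = r and n = "m (Suc (2 * k))"
      and n' = "m (2 * Suc k)"]
  by (simp_all add: play_Suc)

lemma play_stops: "\<exists>k. budget (play (2 * k)) < 0"
proof -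
  have "strategy (play (2 * k)) = \<sigma> \<Longrightarrow> \<exists>k. budget (play (2 * k)) < 0" for \<sigma> k
  proof (induction \<sigma> arbitrary: k)
    case Stop
    then have "budget (play (2 * k)) < 0"
      using play_ok[of "2 * k"] unfolding position_ok_def by (auto dest: strategy_wins_StopD)
    then show ?case by blast
  next
    case (Move y h z \<sigma>)
    show ?case
    proof (cases "budget (play (2 * k)) < 0")
      case False
      then obtain a b where "strategy (play (2 * Suc k)) = \<sigma> a b"
        using play_round_at(3)[of k] Move.prems by auto
      then show ?thesis using Move.IH[of "\<sigma> a" "\<sigma> a b" "Suc k"] by auto
    qed blast
  qed
  then show ?thesis by blast
qed

definition stop_round :: nat where
  "stop_round = (LEAST k. budget (play (2 * k)) < 0)"

lemma budget_stop_round: "budget (play (2 * stop_round)) < 0"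
  unfolding stop_round_def using play_stops by (rule LeastI_ex)

lemma budget_before_stop_round: "k < stop_round \<Longrightarrow> 0 \<le> budget (play (2 * k))"
  unfolding stop_round_def using not_less_Least by fastforce

lemma total_gain:
  "(\<Sum>j=1..k. g (point (play (2 * j))) - g (point (play (2 * j - 1)))) = M + 1 - budget (play (2 * k))"
proof (induction k)
  case (Suc k)
  have "budget (play (2 * Suc k)) =
      budget (play (2 * k)) - (g (point (play (2 * Suc k))) - g (point (play (Suc (2 * k)))))"
    using budget_play_step[of r "m (2 * Suc k)" "Suc (2 * k)"] budget_play_step[of r "m (Suc (2 * k))" "2 * k"]
    by (simp add: play_Suc)
  with Suc.IH show ?case by simp
qed (simp add: play_0)

abbreviation e :: "nat \<Rightarrow> 'a \<Rightarrow> complex" where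
  "e \<equiv> diff_seq (\<lambda>j. F (r j))"

abbreviation t :: 'a where
  "t \<equiv> point (play (2 * stop_round))"

lemma jump_approx:
  assumes "k < stop_round"
  shows "\<bar>Re (e (m (2 * Suc k)) t) - (g (point (play (2 * Suc k))) - g (point (play (Suc (2 * k)))))\<bar>
    \<le> 6 * (tol (play (Suc (2 * k))) * \<epsilon> * (1/2) ^ m (2 * Suc k))"
proof -
  define n where "n = m (2 * Suc k)"
  define P where "P = tol (play (Suc (2 * k))) * \<epsilon> * (1/2) ^ n"
  have m_odd: "m (Suc (2 * k)) < n"
    unfolding n_def using m(1) by (simp add: strict_mono_less)
  then have "1 < n"
    using strict_mono_imp_increasing[OF m(1), of "Suc (2 * k)"] by linarith
  have tol_eq: "tol (play (2 * Suc k)) = tol (play (Suc (2 * k)))"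
    using play_round_at(2)[OF budget_before_stop_round[OF assms]] .
  have "dist (F (r n) t) (f (point (play (2 * Suc k)))) \<le> 2 * P"
    unfolding P_def tol_eq[symmetric] using assms m(1)
    by (intro close_to_active) (auto simp: n_def strict_mono_less)
  then have A: "\<bar>Re (F (r n) t) - g (point (play (2 * Suc k)))\<bar> \<le> 2 * P"
    by (rule order_trans[OF abs_Re_diff_le_dist])
  have "dist (F (r (n - 1)) t) (f (point (play (Suc (2 * k)))))
      \<le> 2 * (tol (play (Suc (2 * k))) * \<epsilon> * (1/2) ^ (n - 1))"
    using assms m_odd by (intro close_to_active) (auto simp: n_def)
  also have "\<dots> = 4 * P"
    unfolding P_def using \<open>1 < n\<close> by (cases n) auto
  finally have B: "\<bar>Re (F (r (n - 1)) t) - g (point (play (Suc (2 * k))))\<bar> \<le> 4 * P"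
    by (rule order_trans[OF abs_Re_diff_le_dist])
  have "Re (e n t) = Re (F (r n) t) - Re (F (r (n - 1)) t)"
    using diff_seq_eq[OF \<open>1 < n\<close>, of "\<lambda>j. F (r j)" t] by simp
  with A B show ?thesis
    unfolding n_def[symmetric] P_def[symmetric] by linarith
qed

lemma jump_estimate:
  assumes "j \<in> {1..stop_round}"
  shows "0 < Re (e (m (2 * j)) t)"
    and "g (point (play (2 * j))) - g (point (play (2 * j - 1))) - 6 * \<epsilon> * (1/2) ^ m (2 * j)
      \<le> Re (e (m (2 * j)) t)"
proof -
  obtain k where k: "j = Suc k" "k < stop_round" using assms by (cases j) auto
  then have idx: "2 * j = 2 * Suc k" "2 * Suc k - 1 = Suc (2 * k)" by simp_all
  define \<mu> where "\<mu> = tol (play (Suc (2 * k)))"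
  define q where "q = (1/2::real) ^ m (2 * Suc k)"
  have "0 < \<mu>" "\<mu> \<le> 1" unfolding \<mu>_def using play_tol by auto
  have "0 < q" "q \<le> 1" unfolding q_def by (simp_all add: power_le_one)
  have "\<epsilon> * q \<le> \<epsilon>" using \<open>q \<le> 1\<close> \<epsilon> by (simp add: mult_left_le)
  then have "\<epsilon> * q \<le> 1/12" using \<epsilon> by linarith
  have "0 \<le> \<mu> * \<epsilon> * q" using \<open>0 < \<mu>\<close> \<open>0 < q\<close> \<epsilon> by simp
  moreover have "\<mu> * \<epsilon> * q \<le> \<mu> / 12"
    using mult_left_mono[OF \<open>\<epsilon> * q \<le> 1/12\<close>, of \<mu>] \<open>0 < \<mu>\<close> by (simp add: mult.assoc)
  moreover have "\<mu> * \<epsilon> * q \<le> \<epsilon> * q"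
    using mult_right_mono[of \<mu> 1 "\<epsilon> * q"] \<open>\<mu> \<le> 1\<close> \<epsilon> \<open>0 < q\<close> by (simp add: mult.assoc)
  moreover have "g (point (play (Suc (2 * k)))) + \<mu> < g (point (play (2 * Suc k)))"
    using play_round_at(1)[OF budget_before_stop_round[OF k(2)]] unfolding \<mu>_def .
  ultimately show "0 < Re (e (m (2 * j)) t)"
    and "g (point (play (2 * j))) - g (point (play (2 * j - 1))) - 6 * \<epsilon> * (1/2) ^ m (2 * j)
      \<le> Re (e (m (2 * j)) t)"
    using jump_approx[OF k(2)] unfolding idx \<mu>_def[symmetric] q_def[symmetric] abs_le_iff
    by linarith+
qed

lemma nonjump_estimate:
  assumes "1 < i" "i \<notin> m ` {1..2 * stop_round}"
  shows "norm (e i t) \<le> 6 * \<epsilon> * (1/2) ^ i"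
proof -
  obtain j where j: "j \<le> 2 * stop_round" "m j \<le> i" "j < 2 * stop_round \<longrightarrow> i < m (Suc j)"
    using active_time_exists by blast
  \<comment> \<open>As \<open>i\<close> is not an index of the play, the same time is active for \<open>i\<close> and \<open>i - 1\<close>.\<close>
  have "m j \<noteq> i"
    using assms j(1) m(2) by (cases j) auto
  with j have "m j \<le> i - 1" "j < 2 * stop_round \<longrightarrow> i - 1 < m (Suc j)" by auto
  define P where "P = tol (play j) * \<epsilon> * (1/2) ^ i"
  have "dist (F (r i) t) (f (point (play j))) \<le> 2 * P"
    unfolding P_def using j by (intro close_to_active) auto
  moreover have "dist (F (r (i - 1)) t) (f (point (play j))) \<le> 2 * (tol (play j) * \<epsilon> * (1/2) ^ (i - 1))"
    using j \<open>m j \<le> i - 1\<close> by (intro close_to_active) auto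
  moreover have "2 * (tol (play j) * \<epsilon> * (1/2) ^ (i - 1)) = 4 * P"
    unfolding P_def using assms(1) by (cases i) auto
  ultimately have "dist (F (r i) t) (F (r (i - 1)) t) \<le> 6 * P"
    using dist_triangle2[of "F (r i) t" "F (r (i - 1)) t" "f (point (play j))"] by linarith
  also have "\<dots> \<le> 6 * (\<epsilon> * (1/2) ^ i)"
    using play_tol[of j] \<epsilon> unfolding P_def mult.assoc
    by (intro mult_left_mono mult_left_le_one_le) auto
  finally show ?thesis
    using diff_seq_eq[OF assms(1), of "\<lambda>j. F (r j)" t] by (simp add: dist_norm mult.assoc)
qed

lemma jumps_sum_gt: "M < (\<Sum>j=1..stop_round. Re (e (m (2 * j)) t))"
proof -
  let ?k = stop_round
  have "(\<Sum>j=1..?k. (1/2::real) ^ m (2 * j)) \<le> (1/2) ^ 0"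
  proof (rule sum_power_half_le)
    show "inj_on (\<lambda>j. m (2 * j)) {1..?k}"
      by (rule inj_onI) (simp add: strict_mono_eq[OF m(1)])
    show "0 < m (2 * j)" if "j \<in> {1..?k}" for j
      using that m strict_mono_less[of m 0 "2 * j"] by auto
  qed simp
  then have "6 * \<epsilon> * (\<Sum>j=1..?k. (1/2) ^ m (2 * j)) \<le> 6 * \<epsilon>"
    using \<epsilon> by (simp add: mult_left_le)
  moreover have "(\<Sum>j=1..?k. g (point (play (2 * j))) - g (point (play (2 * j - 1))) - 6 * \<epsilon> * (1/2) ^ m (2 * j))
      = M + 1 - budget (play (2 * ?k)) - 6 * \<epsilon> * (\<Sum>j=1..?k. (1/2) ^ m (2 * j))"
    using total_gain[of ?k] by (simp add: sum_subtractf sum_distrib_left)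
  moreover have "(\<Sum>j=1..?k. g (point (play (2 * j))) - g (point (play (2 * j - 1))) - 6 * \<epsilon> * (1/2) ^ m (2 * j))
      \<le> (\<Sum>j=1..?k. Re (e (m (2 * j)) t))"
    by (intro sum_mono jump_estimate(2))
  ultimately show ?thesis
    using budget_stop_round \<epsilon> by linarith
qed

lemma nonjumps_summable:
  defines "A \<equiv> {i. 1 < i \<and> i \<notin> m ` {1..2 * stop_round}}"
  shows "(\<lambda>i. norm (e i t)) summable_on A" and "infsum (\<lambda>i. norm (e i t)) A \<le> 3 * \<epsilon>"
proof -
  have partial: "sum (\<lambda>i. norm (e i t)) X \<le> 3 * \<epsilon>" if "finite X" "X \<subseteq> A" for X
  proof -
    have "sum (\<lambda>i. norm (e i t)) X \<le> (\<Sum>i\<in>X. 6 * \<epsilon> * (1/2) ^ i)"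
      using that(2) unfolding A_def by (intro sum_mono nonjump_estimate) auto
    also have "\<dots> = 6 * \<epsilon> * (\<Sum>i\<in>X. (1/2) ^ i)"
      by (simp add: sum_distrib_left)
    also have "(\<Sum>i\<in>X. (1/2::real) ^ i) \<le> (1/2) ^ 1"
      using that unfolding A_def by (intro sum_power_half_le) auto
    finally show ?thesis using \<epsilon> by simp
  qed
  have "eventually (\<lambda>X. sum (\<lambda>i. norm (e i t)) X \<le> 3 * \<epsilon>) (finite_subsets_at_top A)"
    by (rule eventually_finite_subsets_at_top_weakI) (rule partial)
  then show "(\<lambda>i. norm (e i t)) summable_on A"
    by (intro nonneg_bounded_partial_sums_imp_summable_on) auto
  then show "infsum (\<lambda>i. norm (e i t)) A \<le> 3 * \<epsilon>"
    by (rule infsum_le_finite_sums) (rule partial)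
qed

lemma jump_witness_at_stop: "jump_witness e m M (4 * \<epsilon>) t stop_round"
  using jumps_sum_gt jump_estimate(1) nonjumps_summable \<epsilon>
  unfolding jump_witness_def Let_def by fastforce

end

theorem subsequence_exists:
  "\<exists>r. strict_mono r \<and> (\<forall>m::nat \<Rightarrow> nat. strict_mono m \<and> m 0 = 0 \<longrightarrow>
     (\<exists>t\<in>K. \<exists>k. jump_witness (diff_seq (\<lambda>j. F (r j))) m M (4 * \<epsilon>) t k))"
proof -
  obtain r where good: "\<And>n. good_index r n (r n)"
    using good_subsequence_exists by blast
  then have "strict_mono r"
    unfolding good_index_def by (intro strict_monoI_Suc) blast
  then show ?thesis
    using play_point[OF good] jump_witness_at_stop[OF good] by blast
qed

end

lemma jump_subsequence_from_game:
  fixes K :: "'a::metric_space set" and F :: "nat \<Rightarrow> 'a \<Rightarrow> complex" and f :: "'a \<Rightarrow> complex"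
  assumes "compact K" and "\<And>n. continuous_on K (F n)"
    and "\<And>x. x \<in> K \<Longrightarrow> (\<lambda>n. F n x) \<longlonglongrightarrow> f x"
    and "x0 \<in> K" and "jump_game_won K (\<lambda>x. Re (f x)) x0 (M + 1)" and "0 < \<kappa>"
  shows "\<exists>r. strict_mono r \<and> (\<forall>m::nat \<Rightarrow> nat. 0 < m 1 \<and> (\<forall>j\<ge>1. m j < m (Suc j)) \<longrightarrow>
     (\<exists>t\<in>K. \<exists>k. jump_witness (diff_seq (\<lambda>j. F (r j))) m M \<kappa> t k))"
proof -
  obtain \<sigma>0 where "strategy_wins K (\<lambda>x. Re (f x)) x0 (M + 1) \<sigma>0"
    using jump_game_won_imp_strategy[OF assms(5)] by blast
  then interpret jump_subsequence K F f "min \<kappa> 1 / 12" M x0 \<sigma>0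
    using assms by unfold_locales auto
  obtain r where "strict_mono r" and r: "\<And>m :: nat \<Rightarrow> nat. strict_mono m \<Longrightarrow> m 0 = 0 \<Longrightarrow>
      \<exists>t\<in>K. \<exists>k. jump_witness (diff_seq (\<lambda>j. F (r j))) m M (4 * (min \<kappa> 1 / 12)) t k"
    using subsequence_exists by blast
  have "4 * (min \<kappa> 1 / 12) \<le> \<kappa>" using \<open>0 < \<kappa>\<close> by linarith
  show ?thesis
  proof (intro exI[of _ r] conjI allI impI \<open>strict_mono r\<close>)
    fix m :: "nat \<Rightarrow> nat" assume m: "0 < m 1 \<and> (\<forall>j\<ge>1. m j < m (Suc j))"
    \<comment> \<open>The index sequence of the statement starts at 1; the play needs \<open>m 0 = 0\<close>.\<close>
    have "strict_mono (m(0 := 0))"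
      using m by (intro strict_monoI_Suc) (auto simp: Suc_le_eq)
    then obtain t k where "t \<in> K" "jump_witness (diff_seq (\<lambda>j. F (r j))) (m(0 := 0)) M (4 * (min \<kappa> 1 / 12)) t k"
      using r by fastforce
    with \<open>4 * (min \<kappa> 1 / 12) \<le> \<kappa>\<close> show "\<exists>t\<in>K. \<exists>k. jump_witness (diff_seq (\<lambda>j. F (r j))) m M \<kappa> t k"
      using jump_witness_cong[of "m(0 := 0)" m] jump_witness_mono by fastforce
  qed
qed

theorem theorem2p5:
  fixes K :: "'a::metric_space set"
    and fs :: "nat \<Rightarrow> 'a \<Rightarrow> complex"
    and f :: "'a \<Rightarrow> complex"
  assumes "compact K"
    and "\<And>n. continuous_on K (fs n)"
    and "\<exists>B. \<forall>n. \<forall>x\<in>K. norm (fs n x) \<le> B"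
    and "\<And>x. x \<in> K \<Longrightarrow> (\<lambda>n. fs n x) \<longlonglongrightarrow> f x"
    and "f \<notin> D_K K"
  shows "\<exists>c::complex. norm c = 1 \<and>
    (\<forall>M::real. \<forall>\<kappa>::real. \<kappa> > 0 \<longrightarrow>
      (\<exists>r::nat \<Rightarrow> nat. strict_mono r \<and>
        (let b = (\<lambda>j x. c * fs (r j) x); e = diff_seq b in
         \<forall>m::nat \<Rightarrow> nat. (0 < m 1 \<and> (\<forall>j\<ge>1. m j < m (Suc j))) \<longrightarrow>
           (\<exists>t\<in>K. \<exists>k::nat.
              (\<Sum>j=1..k. Re (e (m (2*j)) t)) > M \<and>
              (\<forall>j\<in>{1..k}. Re (e (m (2*j)) t) > 0) \<and>
              (let S = {i. i > 1 \<and> i \<notin> m ` {1..2*k}} in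
                 (\<lambda>i. norm (e i t)) summable_on S \<and>
                 infsum (\<lambda>i. norm (e i t)) S < \<kappa>)))))"
proof -
  obtain B where "\<forall>n. \<forall>x\<in>K. norm (fs n x) \<le> B" using assms(3) by blast
  then have "norm (f x) \<le> B" if "x \<in> K" for x
    using tendsto_norm[OF assms(4)[OF that]] that by (intro tendsto_upperbound) auto
  then obtain c where c: "norm c = 1" and won: "\<forall>M. \<exists>x\<in>K. jump_game_won K (\<lambda>x. Re (c * f x)) x M"
    using jump_game_unbounded_if_not_D[OF assms(5)] by blast
  have witness: "\<exists>r. strict_mono r \<and> (\<forall>m::nat \<Rightarrow> nat. 0 < m 1 \<and> (\<forall>j\<ge>1. m j < m (Suc j)) \<longrightarrow>
      (\<exists>t\<in>K. \<exists>k. jump_witness (diff_seq (\<lambda>j x. c * fs (r j) x)) m M \<kappa> t k))" if "0 < \<kappa>" for M \<kappa>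
  proof -
    obtain x0 where x0: "x0 \<in> K" "jump_game_won K (\<lambda>x. Re (c * f x)) x0 (M + 1)"
      using won by blast
    show ?thesis
      by (rule jump_subsequence_from_game[where f = "\<lambda>x. c * f x", OF assms(1) _ _ x0 that])
        (auto intro: continuous_on_mult_left tendsto_mult_left assms(2,4))
  qed
  show ?thesis
    unfolding Let_def using witness[unfolded jump_witness_def Let_def]
    by (intro exI[of _ c] conjI c allI impI)
qed

end
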